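(* Let $T\colon(B_1,S_1)\to(B_2,S_2)$ be a morphism of $\mathsf{SubS5^S}$. Then $T$ is a morphism of $\mathsf{SubS5^F}$ (i.e.\ $T^\dagger\circ T\subseteq S_1$ and $S_2\subseteq T\circ T^\dagger$) if and only if both of the following hold: (1) for all $a\in B_1$, $a\mathrel{T}0$ implies $a=0$; (2) for all $b_1,b_2\in B_2$ with $b_1\mathrel{S_2}b_2$ there is $a\in B_1$ with $\neg a\mathrel{T}\neg b_1$ and $a\mathrel{T}b_2$.
   Context: A subordination $S\colon A\to B$ between boolean algebras is a relation with (S1) $0\mathrel{S}0$, $1\mathrel{S}1$; (S2) $a,b\mathrel{S}c\Rightarrow(a\vee b)\mathrel{S}c$; (S3) $a\mathrel{S}c,d\Rightarrow a\mathrel{S}(c\wedge d)$; (S4) $a\le b\mathrel{S}c\le d\Rightarrow a\mathrel{S}d$. An $\mathsf{S5}$-subordination on $B$ additionally satisfies (S5) $a\mathrel{S}b\Rightarrow a\le b$; (S6) $a\mathrel{S}b\Rightarrow\neg b\mathrel{S}\neg a$; (S7) $a\mathrel{S}b\Rightarrow\exists c\,(a\mathrel{S}c\mathrel{S}b)$. $\mathsf{SubS5^S}$: objects $(B,S)$ with $S$ an $\mathsf{S5}$-subordination; morphisms $(B,S)\to(B',S')$ subordinations $T$ with $T\circ S=T=S'\circ T$; identity $S$; relational composition ($a\mathrel{(T_2\circ T_1)}c$ iff $\exists b$, $a\mathrel{T_1}b\mathrel{T_2}c$). For $T\colon B_1\to B_2$, $T^\dagger\colon B_2\to B_1$ is given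 by $b\mathrel{T^\dagger}a\iff\neg a\mathrel{T}\neg b$. $\mathsf{SubS5^F}$ is the wide subcategory of $\mathsf{SubS5^S}$ whose morphisms $T\colon(B_1,S_1)\to(B_2,S_2)$ satisfy $T^\dagger\circ T\subseteq S_1$ and $S_2\subseteq T\circ T^\dagger$. *)

theory Defs
  imports Main
begin

text \<open>Boolean algebras are modelled by the type class boolean_algebra; 0 is bot, 1 is top,
  negation is uminus. A relation from A to B is a predicate of type A \<Rightarrow> B \<Rightarrow> bool.\<close>

definition subordination :: "('a::boolean_algebra \<Rightarrow> 'b::boolean_algebra \<Rightarrow> bool) \<Rightarrow> bool" where
  "subordination S \<longleftrightarrow>
     S bot bot \<and> S top top \<and>
     (\<forall>a b c. S a c \<and> S b c \<longrightarrow> S (sup a b) c) \<and>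
     (\<forall>a c d. S a c \<and> S a d \<longrightarrow> S a (inf c d)) \<and>
     (\<forall>a b c d. a \<le> b \<and> S b c \<and> c \<le> d \<longrightarrow> S a d)"

definition S5_subordination :: "('a::boolean_algebra \<Rightarrow> 'a \<Rightarrow> bool) \<Rightarrow> bool" where
  "S5_subordination S \<longleftrightarrow>
     subordination S \<and>
     (\<forall>a b. S a b \<longrightarrow> a \<le> b) \<and>
     (\<forall>a b. S a b \<longrightarrow> S (- b) (- a)) \<and>
     (\<forall>a b. S a b \<longrightarrow> (\<exists>c. S a c \<and> S c b))"

text \<open>Relational composition in the paper's order: rcomp T2 T1 = T2 \<circ> T1 (first T1, then T2).\<close>
definition rcomp :: "('b \<Rightarrow> 'c \<Rightarrow> bool) \<Rightarrow> ('a \<Rightarrow> 'b \<Rightarrow> bool) \<Rightarrow> ('a \<Rightarrow> 'c \<Rightarrow> bool)" where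
  "rcomp T2 T1 = (\<lambda>a c. \<exists>b. T1 a b \<and> T2 b c)"

definition dagger :: "('a::boolean_algebra \<Rightarrow> 'b::boolean_algebra \<Rightarrow> bool) \<Rightarrow> ('b \<Rightarrow> 'a \<Rightarrow> bool)" where
  "dagger T = (\<lambda>b a. T (- a) (- b))"

definition SubS5S_morphism ::
  "('a::boolean_algebra \<Rightarrow> 'a \<Rightarrow> bool) \<Rightarrow> ('b::boolean_algebra \<Rightarrow> 'b \<Rightarrow> bool) \<Rightarrow> ('a \<Rightarrow> 'b \<Rightarrow> bool) \<Rightarrow> bool" where
  "SubS5S_morphism S1 S2 T \<longleftrightarrow>
     S5_subordination S1 \<and> S5_subordination S2 \<and> subordination T \<and>
     rcomp T S1 = T \<and> rcomp S2 T = T"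

definition SubS5F_morphism ::
  "('a::boolean_algebra \<Rightarrow> 'a \<Rightarrow> bool) \<Rightarrow> ('b::boolean_algebra \<Rightarrow> 'b \<Rightarrow> bool) \<Rightarrow> ('a \<Rightarrow> 'b \<Rightarrow> bool) \<Rightarrow> bool" where
  "SubS5F_morphism S1 S2 T \<longleftrightarrow>
     SubS5S_morphism S1 S2 T \<and>
     (\<forall>a a'. rcomp (dagger T) T a a' \<longrightarrow> S1 a a') \<and>
     (\<forall>b b'. S2 b b' \<longrightarrow> rcomp T (dagger T) b b')"

end

theory Submission
  imports Defs
begin

text \<open>The condition \<open>S\<^sub>2 \<subseteq> T \<circ> T\<^sup>\<dagger>\<close> is literally condition (2) once composition and
  \<open>T\<^sup>\<dagger>\<close> are unfolded. For \<open>T\<^sup>\<dagger> \<circ> T \<subseteq> S\<^sub>1\<close>: if \<open>a T 0\<close> then, as \<open>1 T 1\<close>, \<open>a (T\<^sup>\<dagger> \<circ> T) 0\<close>, so \<open>a S\<^sub>1 0\<close>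
  and \<open>a = 0\<close>. Conversely, given \<open>a T b\<close> and \<open>-a' T -b\<close>, the identity \<open>T = T \<circ> S\<^sub>1\<close> yields
  \<open>a S\<^sub>1 c T b\<close> and \<open>-a' S\<^sub>1 d T -b\<close>; then \<open>c \<sqinter> d T b \<sqinter> -b = 0\<close>, so \<open>c \<le> -d\<close> by condition (1),
  and \<open>a \<le> c \<le> -d S\<^sub>1 a'\<close> gives \<open>a S\<^sub>1 a'\<close>.\<close>

lemma subordination_top: "subordination T \<Longrightarrow> T top top"
  unfolding subordination_def by simp

lemma subordination_inf_right: "subordination T \<Longrightarrow> T a c \<Longrightarrow> T a d \<Longrightarrow> T a (inf c d)"
  unfolding subordination_def by simp

lemma subordination_mono: "subordination T \<Longrightarrow> a \<le> b \<Longrightarrow> T b c \<Longrightarrow> c \<le> d \<Longrightarrow> T a d"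
  unfolding subordination_def by metis

lemma S5_subordination_le: "S5_subordination S \<Longrightarrow> S a b \<Longrightarrow> a \<le> b"
  unfolding S5_subordination_def by blast

lemma S5_subordination_compl: "S5_subordination S \<Longrightarrow> S a b \<Longrightarrow> S (- b) (- a)"
  unfolding S5_subordination_def by blast

lemma S5_subordination_subordination: "S5_subordination S \<Longrightarrow> subordination S"
  unfolding S5_subordination_def by blast

lemma rcomp_dagger_right_iff: "rcomp T (dagger T) b b' \<longleftrightarrow> (\<exists>a. T (- a) (- b) \<and> T a b')"
  unfolding rcomp_def dagger_def by simp

lemma rcomp_dagger_left_iff: "rcomp (dagger T) T a a' \<longleftrightarrow> (\<exists>b. T a b \<and> T (- a') (- b))"
  unfolding rcomp_def dagger_def by simp

lemma rcomp_factor_right: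
  assumes "rcomp T S = T" and "T a b"
  obtains c where "S a c" and "T c b"
proof -
  have "rcomp T S a b"
    using assms by simp
  then show ?thesis
    using that unfolding rcomp_def by blast
qed

lemma reflects_bot_if_dagger_comp_le:
  assumes S: "\<And>a b. S a b \<Longrightarrow> a \<le> b" and T: "subordination T"
    and le: "\<And>a a'. rcomp (dagger T) T a a' \<Longrightarrow> S a a'"
    and "T a bot"
  shows "a = bot"
proof -
  have "rcomp (dagger T) T a bot"
    using \<open>T a bot\<close> subordination_top[OF T] by (auto simp: rcomp_dagger_left_iff)
  then show ?thesis
    using S le bot_unique by blast
qed

lemma dagger_comp_le_if_reflects_bot:
  assumes S: "S5_subordination S" and T: "subordination T" and TS: "rcomp T S = T"
    and reflects: "\<And>a. T a bot \<Longrightarrow> a = bot"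
    and "rcomp (dagger T) T a a'"
  shows "S a a'"
proof -
  obtain b where "T a b" and "T (- a') (- b)"
    using \<open>rcomp (dagger T) T a a'\<close> by (auto simp: rcomp_dagger_left_iff)
  obtain c where ac: "S a c" and cb: "T c b"
    using rcomp_factor_right[OF TS \<open>T a b\<close>] .
  obtain d where a'd: "S (- a') d" and db: "T d (- b)"
    using rcomp_factor_right[OF TS \<open>T (- a') (- b)\<close>] .
  have "T (inf c d) b"
    using subordination_mono[OF T _ cb order_refl] by simp
  moreover have "T (inf c d) (- b)"
    using subordination_mono[OF T _ db order_refl] by simp
  ultimately have "T (inf c d) (inf b (- b))"
    by (rule subordination_inf_right[OF T])
  then have "inf c d = bot"
    using reflects[of "inf c d"] by simp
  then have "c \<le> - d"
    by (simp add: inf_shunt)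
  then have "a \<le> - d"
    using S5_subordination_le[OF S ac] by (rule order_trans[rotated])
  moreover have "S (- d) a'"
    using S5_subordination_compl[OF S a'd] by simp
  ultimately show ?thesis
    by (rule subordination_mono[OF S5_subordination_subordination[OF S] _ _ order_refl])
qed

theorem lemma6p5:
  fixes S1 :: "'a::boolean_algebra \<Rightarrow> 'a \<Rightarrow> bool"
    and S2 :: "'b::boolean_algebra \<Rightarrow> 'b \<Rightarrow> bool"
    and T :: "'a \<Rightarrow> 'b \<Rightarrow> bool"
  assumes "SubS5S_morphism S1 S2 T"
  shows "SubS5F_morphism S1 S2 T \<longleftrightarrow>
           ((\<forall>a. T a bot \<longrightarrow> a = bot) \<and>
            (\<forall>b1 b2. S2 b1 b2 \<longrightarrow> (\<exists>a. T (- a) (- b1) \<and> T a b2)))"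
proof -
  have S1: "S5_subordination S1" and T: "subordination T" and TS1: "rcomp T S1 = T"
    using assms unfolding SubS5S_morphism_def by auto
  have dagger_comp_le_iff: "(\<forall>a a'. rcomp (dagger T) T a a' \<longrightarrow> S1 a a') \<longleftrightarrow> (\<forall>a. T a bot \<longrightarrow> a = bot)"
  proof
    show "\<forall>a. T a bot \<longrightarrow> a = bot" if "\<forall>a a'. rcomp (dagger T) T a a' \<longrightarrow> S1 a a'"
      using reflects_bot_if_dagger_comp_le[OF S5_subordination_le[OF S1] T] that by blast
    show "\<forall>a a'. rcomp (dagger T) T a a' \<longrightarrow> S1 a a'" if "\<forall>a. T a bot \<longrightarrow> a = bot"
      using dagger_comp_le_if_reflects_bot[OF S1 T TS1] that by blast
  qed
  show ?thesis
    unfolding SubS5F_morphism_def rcomp_dagger_right_iff dagger_comp_le_iff using assms by simp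
qed

end
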